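(* Let $p\in M$, $0<r\le\tau_M$, and let $U\subseteq B_r(p)\cap M$ be measurable. Then $\mathrm{vol}(U)\ge\mathrm{vol}(\zeta_p(U))$, where $\mathrm{vol}(U)$ is the Riemannian volume of $U$ in $M$ and $\mathrm{vol}(\zeta_p(U))$ is the $m$-dimensional Lebesgue volume of $\zeta_p(U)$ in $T_pM$.
   Context: $M\subset\mathbb{R}^d$ is a closed smooth $m$-dimensional submanifold with induced metric and reach $\tau_M>0$ (reach $=\inf_{p\in M}d(p,\mathrm{Med}(M))$, $\mathrm{Med}(M)$ the set of points with more than one nearest point in $M$). $T_pM$ is the affine tangent $m$-plane at $p$; $\zeta_p:M\to T_pM$ is the restriction of the orthogonal projection onto it. $B_r(p)$ is the open Euclidean ball. *)

theory Defs
  imports "HOL-Analysis.Analysis" "HOL-Library.Extended_Real"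
begin

fun Ck_on :: "nat \<Rightarrow> 'a::real_normed_vector set \<Rightarrow> ('a \<Rightarrow> 'b::real_normed_vector) \<Rightarrow> bool" where
  "Ck_on 0 S f = continuous_on S f"
| "Ck_on (Suc k) S f =
     (\<exists>f'. (\<forall>x\<in>S. (f has_derivative f' x) (at x)) \<and> (\<forall>v. Ck_on k S (\<lambda>x. f' x v)))"

definition smooth_on :: "'a::real_normed_vector set \<Rightarrow> ('a \<Rightarrow> 'b::real_normed_vector) \<Rightarrow> bool" where
  "smooth_on S f \<longleftrightarrow> (\<forall>k. Ck_on k S f)"

definition local_param :: "(real^'d) set \<Rightarrow> (real^'m \<Rightarrow> real^'d) \<Rightarrow> (real^'m) set \<Rightarrow> bool" where
  "local_param M \<phi> W \<longleftrightarrow>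
     open W \<and> smooth_on W \<phi> \<and> inj_on \<phi> W \<and>
     (\<forall>w\<in>W. \<exists>D. (\<phi> has_derivative D) (at w) \<and> inj D) \<and>
     (\<exists>V. open V \<and> \<phi> ` W = M \<inter> V) \<and>
     continuous_on (\<phi> ` W) (inv_into W \<phi>)"

definition smooth_submanifold :: "'m::finite itself \<Rightarrow> (real^'d) set \<Rightarrow> bool" where
  "smooth_submanifold TYPE('m) M \<longleftrightarrow>
     (\<forall>p\<in>M. \<exists>(\<phi> :: real^'m \<Rightarrow> real^'d) W. local_param M \<phi> W \<and> p \<in> \<phi> ` W)"

definition gram_factor :: "(real^'m \<Rightarrow> real^'d) \<Rightarrow> real^'m \<Rightarrow> real" where
  "gram_factor \<phi> w = sqrt (det (\<chi> i j. frechet_derivative \<phi> (at w) (axis i 1) \<bullet>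
                                         frechet_derivative \<phi> (at w) (axis j 1)))"

definition riemannian_volume :: "'m::finite itself \<Rightarrow> (real^'d) set \<Rightarrow> (real^'d) measure \<Rightarrow> bool" where
  "riemannian_volume TYPE('m) M \<mu> \<longleftrightarrow>
     space \<mu> = M \<and>
     sets \<mu> = {A. A \<subseteq> M \<and> (\<forall>(\<phi> :: real^'m \<Rightarrow> real^'d) W. local_param M \<phi> W \<longrightarrow>
                                   {w\<in>W. \<phi> w \<in> A} \<in> sets lebesgue)} \<and>
     (\<forall>(\<phi> :: real^'m \<Rightarrow> real^'d) W A. local_param M \<phi> W \<longrightarrow> A \<in> sets \<mu> \<longrightarrow> A \<subseteq> \<phi> ` W \<longrightarrow>
        emeasure \<mu> A = (\<integral>\<^sup>+ w \<in> {w\<in>W. \<phi> w \<in> A}. ennreal (gram_factor \<phi> w) \<partial>lebesgue))"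

definition medial_axis :: "'a::metric_space set \<Rightarrow> 'a set" where
  "medial_axis M = {x. \<exists>a\<in>M. \<exists>b\<in>M. a \<noteq> b \<and> dist x a = infdist x M \<and> dist x b = infdist x M}"

definition reach :: "'a::metric_space set \<Rightarrow> ereal" where
  "reach M = (INF p\<in>M. if medial_axis M = {} then \<infinity> else ereal (infdist p (medial_axis M)))"

definition tangent_space :: "'a::real_normed_vector set \<Rightarrow> 'a \<Rightarrow> 'a set" where
  "tangent_space M p = {v. \<exists>\<gamma> e. e > 0 \<and> (\<forall>t\<in>{-e<..<e}. \<gamma> t \<in> M) \<and> \<gamma> 0 = p \<and>
                                 (\<gamma> has_vector_derivative v) (at 0)}"

definition affine_tangent :: "'a::real_normed_vector set \<Rightarrow> 'a \<Rightarrow> 'a set" where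
  "affine_tangent M p = (\<lambda>v. p + v) ` tangent_space M p"

definition tangent_proj :: "'a::real_inner set \<Rightarrow> 'a \<Rightarrow> 'a \<Rightarrow> 'a" where
  "tangent_proj M p x = (THE y. y \<in> affine_tangent M p \<and> (\<forall>v\<in>tangent_space M p. (x - y) \<bullet> v = 0))"

end

(*
  In the coordinates y of T_pM given by the isometry L, the projection zeta_p is
  x |-> p + L (L^* (x - p)), so the projected set is the image of U under h x = L^* (x - p).
  In a local parametrisation phi the map h o phi has derivative L^* o D phi, and
  |det (L^* o D phi)| <= sqrt (det (D phi^T D phi)), the Riemannian density: writing
  D phi = V o R with V an isometry, L^* o V is a contraction and so has determinant of absolute
  value at most 1.
*)
theory Submission
  imports Defs
begin

section \<open>Change of variables for an arbitrary finite index type\<close>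

text \<open>The change-of-variables theorems of HOL-Analysis require an index type of class
  \<^class>\<open>wellorder\<close>. A copy of a finite type, ordered through an injection into the naturals,
  lets us transfer them along a relabelling of coordinates.\<close>

typedef 'a ordered_copy = "UNIV :: 'a set" by simp

instance ordered_copy :: (finite) finite
proof
  have "UNIV = Abs_ordered_copy ` UNIV"
    by (metis Rep_ordered_copy_inverse surj_def)
  then show "finite (UNIV :: 'a ordered_copy set)"
    by (metis finite finite_imageI)
qed

instantiation ordered_copy :: (countable) linorder
begin
definition "x \<le> y \<longleftrightarrow> to_nat (Rep_ordered_copy x) \<le> to_nat (Rep_ordered_copy y)"
definition "x < y \<longleftrightarrow> to_nat (Rep_ordered_copy x) < to_nat (Rep_ordered_copy y)"
instance
  by standard (auto simp: less_eq_ordered_copy_def less_ordered_copy_def Rep_ordered_copy_inject)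
end

instance ordered_copy :: (countable) wellorder
proof
  fix P :: "'a ordered_copy \<Rightarrow> bool" and a :: "'a ordered_copy"
  assume step: "\<And>x. (\<And>y. y < x \<Longrightarrow> P y) \<Longrightarrow> P x"
  show "P a"
    by (induction a rule: measure_induct_rule[of "\<lambda>x. to_nat (Rep_ordered_copy x)"])
      (rule step, simp add: less_ordered_copy_def)
qed

lemma det_reindex:
  fixes A :: "'a::comm_ring_1^'n::finite^'n" and r :: "'k::finite \<Rightarrow> 'n"
  assumes r: "bij r"
  shows "det (\<chi> i j. A $ r i $ r j) = det A"
proof -
  let ?P = "\<lambda>p. map_permutation UNIV r p"
  have "det (\<chi> i j. A $ r i $ r j) =
        (\<Sum>q | q permutes (UNIV::'k set). of_int (sign q) * (\<Prod>i\<in>UNIV. A $ r i $ r (q i)))"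
    by (simp add: det_def)
  also have "\<dots> = (\<Sum>p | p permutes (UNIV::'n set). of_int (sign p) * (\<Prod>j\<in>UNIV. A $ j $ p j))"
  proof (rule sum.reindex_bij_witness[where i="map_permutation UNIV (inv r)" and j="?P"])
    fix q :: "'k \<Rightarrow> 'k" assume q: "q \<in> {q. q permutes UNIV}"
    show "?P q \<in> {p. p permutes UNIV}"
      using q r by (simp add: map_permutation_permutes bij_betw_def)
    show "map_permutation UNIV (inv r) (?P q) = q"
      using q r by (intro map_permutation_compose_inv) (auto simp: bij_betw_def)
    have "(\<Prod>j\<in>UNIV. A $ j $ ?P q j) = (\<Prod>i\<in>UNIV. A $ r i $ ?P q (r i))"
      using r by (simp add: prod.reindex_bij_betw[symmetric, of r UNIV UNIV] bij_betw_def)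
    also have "\<dots> = (\<Prod>i\<in>UNIV. A $ r i $ r (q i))"
      using r by (simp add: map_permutation_apply bij_is_inj)
    finally show "of_int (sign (?P q)) * (\<Prod>j\<in>UNIV. A $ j $ ?P q j) =
                  of_int (sign q) * (\<Prod>i\<in>UNIV. A $ r i $ r (q i))"
      using q r by (simp add: sign_map_permutation bij_is_inj)
  next
    fix p :: "'n \<Rightarrow> 'n" assume p: "p \<in> {p. p permutes UNIV}"
    have ir: "bij (inv r)" using r by (simp add: bij_imp_bij_inv)
    show "map_permutation UNIV (inv r) p \<in> {q. q permutes UNIV}"
      using p ir by (simp add: map_permutation_permutes bij_betw_def)
    show "?P (map_permutation UNIV (inv r) p) = p"
      using p ir r by (intro map_permutation_compose_inv) (auto simp: bij_betw_def surj_f_inv_f)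
  qed
  also have "\<dots> = det A"
    by (simp add: det_def)
  finally show ?thesis .
qed

lemma inner_basis_bijection:
  fixes T :: "'a::euclidean_space \<Rightarrow> 'b::euclidean_space"
  assumes T: "linear T" "bij_betw T Basis Basis" and c: "c \<in> Basis"
  shows "T x \<bullet> T c = x \<bullet> c"
proof -
  have Tb: "T b \<bullet> T c = (if b = c then 1 else 0)" if "b \<in> Basis" for b
  proof -
    have "T b = T c \<longleftrightarrow> b = c"
      using bij_betw_imp_inj_on[OF T(2)] c that by (auto dest: inj_onD)
    then show ?thesis
      using T(2) c that by (simp add: bij_betw_apply inner_Basis)
  qed
  have "T x = (\<Sum>b\<in>Basis. (x \<bullet> b) *\<^sub>R T b)"
    by (subst euclidean_representation[symmetric, of x]) (simp add: linear_sum[OF T(1)] linear_scale[OF T(1)])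
  then show ?thesis
    using c by (simp add: inner_sum_left Tb if_distrib cong: if_cong)
qed

lemma distr_lborel_basis_bijection:
  fixes T :: "'a::euclidean_space \<Rightarrow> 'b::euclidean_space"
  assumes T: "linear T" "bij_betw T Basis Basis"
  shows "distr lborel borel T = lborel"
proof (rule lborel_eqI[symmetric])
  have meas: "T \<in> borel_measurable lborel"
    using T(1) by (simp add: linear_continuous_on linear_conv_bounded_linear borel_measurable_continuous_onI)
  fix l u :: 'b assume lu: "\<And>b. b \<in> Basis \<Longrightarrow> l \<bullet> b \<le> u \<bullet> b"
  define pull :: "'b \<Rightarrow> 'a" where "pull y = (\<Sum>c\<in>Basis. (y \<bullet> T c) *\<^sub>R c)" for y
  have pull: "pull y \<bullet> c = y \<bullet> T c" if "c \<in> Basis" for y c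
    using that by (simp add: pull_def inner_sum_left inner_Basis if_distrib cong: if_cong)
  have Basis_eq: "Basis = T ` Basis"
    using T(2) by (simp add: bij_betw_def)
  have ball_Basis: "(\<forall>b\<in>Basis. P b) \<longleftrightarrow> (\<forall>c\<in>Basis. P (T c))" for P
    using Basis_eq by (metis imageE imageI)
  have "T x \<in> box l u \<longleftrightarrow> x \<in> box (pull l) (pull u)" for x
    using ball_Basis[of "\<lambda>b. l \<bullet> b < T x \<bullet> b \<and> T x \<bullet> b < u \<bullet> b"]
    by (simp add: mem_box pull inner_basis_bijection[OF T])
  then have "T -` box l u = box (pull l) (pull u)"
    by auto
  moreover have "(\<Prod>c\<in>Basis. (pull u - pull l) \<bullet> c) = (\<Prod>b\<in>Basis. (u - l) \<bullet> b)"
    using prod.reindex_bij_betw[OF T(2), of "\<lambda>b. (u - l) \<bullet> b"]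
    by (simp add: inner_diff_left pull)
  moreover have "\<forall>c\<in>Basis. pull l \<bullet> c \<le> pull u \<bullet> c"
    using T(2) lu by (auto simp: pull bij_betw_def)
  ultimately show "emeasure (distr lborel borel T) (box l u) = (\<Prod>b\<in>Basis. (u - l) \<bullet> b)"
    using meas by (simp add: emeasure_distr emeasure_lborel_box_eq inner_diff_left)
qed simp

lemma
  fixes T :: "'a::euclidean_space \<Rightarrow> 'b::euclidean_space"
  assumes T: "linear T" "bij_betw T Basis Basis"
  shows measurable_lebesgue_basis_bijection: "T \<in> lebesgue \<rightarrow>\<^sub>M lebesgue"
    and distr_lebesgue_basis_bijection: "distr lebesgue lebesgue T = lebesgue"
proof -
  have borel: "T \<in> borel_measurable borel"
    using T(1) by (simp add: linear_continuous_on linear_conv_bounded_linear borel_measurable_continuous_onI)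
  then have meas: "T \<in> lebesgue \<rightarrow>\<^sub>M lborel"
    by (simp add: measurable_completion)
  have "distr lebesgue lborel T = distr lborel lborel T"
    using borel by (intro distr_completion) simp
  also have "\<dots> = distr lborel borel T"
    by (rule distr_cong) simp_all
  finally have distr: "distr lebesgue lborel T = lborel"
    by (simp add: distr_lborel_basis_bijection[OF T])
  show "T \<in> lebesgue \<rightarrow>\<^sub>M lebesgue"
    using completion.measurable_completion2[OF meas] distr by simp
  show "distr lebesgue lebesgue T = lebesgue"
    using completion.completion_distr_eq[OF meas] distr by simp
qed

definition relabel :: "real^'n::finite \<Rightarrow> real^'n ordered_copy" where
  "relabel x = (\<chi> i. x $ Rep_ordered_copy i)"

definition unrelabel :: "real^'n ordered_copy \<Rightarrow> real^'n::finite" where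
  "unrelabel y = (\<chi> j. y $ Abs_ordered_copy j)"

lemma relabel_unrelabel [simp]: "relabel (unrelabel y) = y"
  by (simp add: relabel_def unrelabel_def vec_eq_iff Rep_ordered_copy_inverse)

lemma unrelabel_relabel [simp]: "unrelabel (relabel x) = x"
  by (simp add: relabel_def unrelabel_def vec_eq_iff Abs_ordered_copy_inverse)

lemma inj_relabel: "inj relabel"
  by (metis injI unrelabel_relabel)

lemma linear_relabel: "linear relabel"
  by (rule linearI) (simp_all add: relabel_def vec_eq_iff)

lemma linear_unrelabel: "linear unrelabel"
  by (rule linearI) (simp_all add: unrelabel_def vec_eq_iff)

lemma bij_Rep_ordered_copy: "bij Rep_ordered_copy"
  by (metis Rep_ordered_copy_inverse Abs_ordered_copy_inverse UNIV_I bij_betw_byWitness subset_UNIV)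

lemma unrelabel_axis: "unrelabel (axis j c) = axis (Rep_ordered_copy j) c"
  by (auto simp: unrelabel_def axis_def vec_eq_iff Abs_ordered_copy_inverse Rep_ordered_copy_inverse)

lemma relabel_axis: "relabel (axis j c) = axis (Abs_ordered_copy j) c"
  by (metis Abs_ordered_copy_inverse UNIV_I relabel_unrelabel unrelabel_axis)

lemma norm_relabel: "norm (relabel x) = norm x"
  using sum.reindex_bij_betw[OF bij_Rep_ordered_copy, of "\<lambda>j. (x $ j)\<^sup>2"]
  by (simp add: norm_vec_def L2_set_def relabel_def)

lemma norm_unrelabel: "norm (unrelabel y) = norm y"
  by (metis norm_relabel relabel_unrelabel)

lemma bij_betw_relabel_Basis: "bij_betw relabel Basis Basis"
proof (rule bij_betw_byWitness[where f'=unrelabel])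
  show "relabel ` Basis \<subseteq> Basis" "unrelabel ` Basis \<subseteq> Basis"
    by (auto simp: Basis_vec_def relabel_axis unrelabel_axis)
qed simp_all

lemma bij_betw_unrelabel_Basis: "bij_betw unrelabel Basis Basis"
proof (rule bij_betw_byWitness[where f'=relabel])
  show "relabel ` Basis \<subseteq> Basis" "unrelabel ` Basis \<subseteq> Basis"
    by (auto simp: Basis_vec_def relabel_axis unrelabel_axis)
qed simp_all

lemma det_matrix_relabel: "det (matrix (\<lambda>y. relabel (K (unrelabel y)))) = det (matrix K)"
proof -
  have "matrix (\<lambda>y. relabel (K (unrelabel y))) = (\<chi> i j. matrix K $ Rep_ordered_copy i $ Rep_ordered_copy j)"
    by (simp add: matrix_def vec_eq_iff unrelabel_axis relabel_def)
  then show ?thesis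
    by (simp add: det_reindex bij_Rep_ordered_copy)
qed

lemma has_derivative_relabel_conj:
  assumes "(f has_derivative f') (at (unrelabel y) within S)"
  shows "((\<lambda>y. relabel (f (unrelabel y))) has_derivative (\<lambda>h. relabel (f' (unrelabel h))))
           (at y within relabel ` S)"
proof -
  have "(unrelabel has_derivative unrelabel) (at y within relabel ` S)"
    using linear_unrelabel linear_conv_bounded_linear bounded_linear_imp_has_derivative by blast
  moreover have "unrelabel ` relabel ` S = S"
    by (simp add: image_image)
  ultimately have "(f \<circ> unrelabel has_derivative f' \<circ> unrelabel) (at y within relabel ` S)"
    using assms by (intro diff_chain_within) auto
  then show ?thesis
    using bounded_linear.has_derivative[OF linear_relabel[unfolded linear_conv_bounded_linear]]
    by (simp add: o_def)
qed

lemma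
  fixes A :: "(real^'n::finite) set"
  assumes "A \<in> sets lebesgue"
  shows sets_lebesgue_relabel: "relabel ` A \<in> sets lebesgue"
    and emeasure_lebesgue_relabel: "emeasure lebesgue (relabel ` A) = emeasure lebesgue A"
proof -
  have eq: "relabel ` A = unrelabel -` A"
    by (force simp: image_iff)
  have meas: "unrelabel \<in> lebesgue \<rightarrow>\<^sub>M lebesgue"
    by (rule measurable_lebesgue_basis_bijection[OF linear_unrelabel bij_betw_unrelabel_Basis])
  show "relabel ` A \<in> sets lebesgue"
    using measurable_sets[OF meas assms] by (simp add: eq)
  show "emeasure lebesgue (relabel ` A) = emeasure lebesgue A"
    using emeasure_distr[OF meas assms]
    by (simp add: eq distr_lebesgue_basis_bijection[OF linear_unrelabel bij_betw_unrelabel_Basis])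
qed

lemma emeasure_differentiable_image_le_wellorder:
  fixes f :: "real^'n::{finite,wellorder} \<Rightarrow> real^'n::_"
  assumes S: "S \<in> sets lebesgue"
    and deriv: "\<And>x. x \<in> S \<Longrightarrow> (f has_derivative f' x) (at x within S)"
  shows "emeasure lebesgue (f ` S) \<le> (\<integral>\<^sup>+ x \<in> S. ennreal \<bar>det (matrix (f' x))\<bar> \<partial>lebesgue)"
proof -
  let ?J = "\<lambda>x. \<bar>det (matrix (f' x))\<bar>"
  have restrict: "(\<integral>\<^sup>+ x \<in> S. ennreal (?J x) \<partial>lebesgue) = (\<integral>\<^sup>+ x. ennreal (?J x) \<partial>lebesgue_on S)"
    using S by (simp add: nn_integral_restrict_space)
  show ?thesis
  proof (cases "(\<integral>\<^sup>+ x \<in> S. ennreal (?J x) \<partial>lebesgue) = \<infinity>")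
    case False
    have "?J \<in> borel_measurable (lebesgue_on S)"
      using borel_measurable_det_Jacobian[OF S deriv] by (rule borel_measurable_abs)
    then have int: "integrable (lebesgue_on S) ?J"
      using False restrict by (intro integrableI_nonneg) (auto simp: top.not_eq_extremum)
    then have Jint: "?J integrable_on S"
      using S by (rule integrable_on_lebesgue_on)
    have "emeasure lebesgue (f ` S) = ennreal (measure lebesgue (f ` S))"
      using measurable_differentiable_image[OF S deriv Jint] by (rule emeasure_eq_measure2)
    also have "\<dots> \<le> ennreal (integral S ?J)"
      using measure_differentiable_image[OF S deriv Jint] by (rule ennreal_leI)
    also have "\<dots> = (\<integral>\<^sup>+ x. ennreal (?J x) \<partial>lebesgue_on S)"
      using nn_integral_eq_integral[OF int] lebesgue_integral_eq_integral[OF int S] by simp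
    finally show ?thesis
      by (simp add: restrict)
  qed simp
qed

lemma emeasure_differentiable_image_le:
  fixes f :: "real^'n::finite \<Rightarrow> real^'n"
  assumes S: "S \<in> sets lebesgue"
    and deriv: "\<And>x. x \<in> S \<Longrightarrow> (f has_derivative f' x) (at x within S)"
  shows "emeasure lebesgue (f ` S) \<le> (\<integral>\<^sup>+ x \<in> S. ennreal \<bar>det (matrix (f' x))\<bar> \<partial>lebesgue)"
proof -
  define F where "F y = relabel (f (unrelabel y))" for y
  define F' where "F' y = (\<lambda>h. relabel (f' (unrelabel y) (unrelabel h)))" for y
  let ?S = "relabel ` S"
  have S': "?S \<in> sets lebesgue"
    using S by (rule sets_lebesgue_relabel)
  have deriv': "(F has_derivative F' y) (at y within ?S)" if "y \<in> ?S" for y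
    unfolding F_def F'_def using that deriv by (intro has_derivative_relabel_conj) auto
  have "f differentiable_on S"
    using deriv by (auto simp: differentiable_on_def differentiable_def)
  then have fS: "f ` S \<in> sets lebesgue"
    using S by (intro differentiable_image_in_sets_lebesgue) auto
  have J: "\<bar>det (matrix (F' y))\<bar> = \<bar>det (matrix (f' (unrelabel y)))\<bar>" for y
    by (simp add: F'_def det_matrix_relabel)
  txt \<open>The Jacobian is known to be measurable only on the well-ordered side, so the integral is
    transported from there.\<close>
  have "(\<lambda>y. if y \<in> ?S then \<bar>det (matrix (F' y))\<bar> else 0) \<in> borel_measurable lebesgue"
    using borel_measurable_det_Jacobian[OF S' deriv'] S'
    by (simp add: borel_measurable_if borel_measurable_abs)
  then have "(\<lambda>y. ennreal (if y \<in> ?S then \<bar>det (matrix (F' y))\<bar> else 0)) \<in> borel_measurable lebesgue"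
    by measurable
  moreover have "(\<lambda>y. ennreal (if y \<in> ?S then \<bar>det (matrix (F' y))\<bar> else 0))
      = (\<lambda>y. ennreal \<bar>det (matrix (f' (unrelabel y)))\<bar> * indicator ?S y)"
    by (simp add: J fun_eq_iff indicator_def)
  ultimately have Jmeas:
    "(\<lambda>y. ennreal \<bar>det (matrix (f' (unrelabel y)))\<bar> * indicator ?S y) \<in> borel_measurable lebesgue"
    by simp
  have "emeasure lebesgue (f ` S) = emeasure lebesgue (F ` ?S)"
    using emeasure_lebesgue_relabel[OF fS] by (simp add: F_def image_image)
  also have "\<dots> \<le> (\<integral>\<^sup>+ y \<in> ?S. ennreal \<bar>det (matrix (F' y))\<bar> \<partial>lebesgue)"
    using S' deriv' by (rule emeasure_differentiable_image_le_wellorder)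
  also have "\<dots> = (\<integral>\<^sup>+ y. ennreal \<bar>det (matrix (f' (unrelabel y)))\<bar> * indicator ?S y
                      \<partial>distr lebesgue lebesgue relabel)"
    by (simp add: J distr_lebesgue_basis_bijection[OF linear_relabel bij_betw_relabel_Basis])
  also have "\<dots> = (\<integral>\<^sup>+ x \<in> S. ennreal \<bar>det (matrix (f' x))\<bar> \<partial>lebesgue)"
    using Jmeas
    by (simp add: nn_integral_distr measurable_lebesgue_basis_bijection[OF linear_relabel bij_betw_relabel_Basis]
                  indicator_def inj_image_mem_iff[OF inj_relabel] cong: measurable_cong_sets)
  finally show ?thesis .
qed

lemma abs_det_matrix_contraction_le_1:
  fixes K :: "real^'n::finite \<Rightarrow> real^'n"
  assumes K: "linear K" and contr: "\<And>x. norm (K x) \<le> norm x"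
  shows "\<bar>det (matrix K)\<bar> \<le> 1"
proof -
  define K' where "K' = (\<lambda>y. relabel (K (unrelabel y)))"
  have lin: "linear K'"
    using linear_compose[OF linear_compose[OF linear_unrelabel K] linear_relabel]
    by (simp add: K'_def o_def)
  have contr': "norm (K' y) \<le> norm y" for y
    using contr[of "unrelabel y"] by (simp add: K'_def norm_relabel norm_unrelabel)
  let ?B = "ball (0::real^'n ordered_copy) 1"
  have "K' ` ?B \<subseteq> ?B"
    using contr' by (meson image_subsetI le_less_trans mem_ball_0)
  then have "measure lebesgue (K' ` ?B) \<le> measure lebesgue ?B"
    by (intro measure_mono_fmeasurable fmeasurableD measurable_linear_image[OF lin]) auto
  then have "\<bar>det (matrix K')\<bar> * measure lebesgue ?B \<le> measure lebesgue ?B"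
    by (simp add: measure_linear_image[OF lin])
  moreover have "det (matrix K') = det (matrix K)"
    unfolding K'_def by (rule det_matrix_relabel)
  ultimately show ?thesis
    by (simp add: content_ball_pos)
qed

section \<open>Projection onto a tangent plane\<close>

lemma inner_linear_isometry:
  fixes U :: "'a::euclidean_space \<Rightarrow> 'b::euclidean_space"
  assumes U: "linear U" and n: "\<And>x. norm (U x) = norm x"
  shows "U x \<bullet> U y = x \<bullet> y"
proof -
  have "norm (U (x + y))^2 = norm (x+y)^2" "norm (U (x - y))^2 = norm (x-y)^2" by (simp_all add: n)
  then have "norm (U x + U y)^2 = norm (x+y)^2" "norm (U x - U y)^2 = norm (x-y)^2"
    by (simp_all add: linear_add[OF U] linear_diff[OF U])
  then show ?thesis
    by (simp add: power2_norm_eq_inner inner_add inner_diff inner_commute)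
qed

lemma adjoint_isometry_left_inverse:
  fixes U :: "'a::euclidean_space \<Rightarrow> 'b::euclidean_space"
  assumes U: "linear U" and n: "\<And>x. norm (U x) = norm x"
  shows "adjoint U (U x) = x"
proof -
  have "\<And>z. z \<bullet> adjoint U (U x) = z \<bullet> x"
    using adjoint_works[OF U] inner_linear_isometry[OF U n] by metis
  then show ?thesis
    by (metis inner_diff_right right_minus_eq inner_eq_zero_iff)
qed

lemma norm_adjoint_isometry_le:
  fixes L :: "'a::euclidean_space \<Rightarrow> 'b::euclidean_space"
  assumes L: "linear L" and n: "\<And>x. norm (L x) = norm x"
  shows "norm (adjoint L y) \<le> norm y"
proof -
  have "norm (adjoint L y)^2 = L (adjoint L y) \<bullet> y"
    by (simp add: power2_norm_eq_inner adjoint_works[OF L])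
  also have "\<dots> \<le> norm (L (adjoint L y)) * norm y" using Cauchy_Schwarz_ineq2 by (meson abs_ge_self order_trans)
  also have "\<dots> = norm (adjoint L y) * norm y" by (simp add: n)
  finally have "norm (adjoint L y)^2 \<le> norm (adjoint L y) * norm y" .
  then show ?thesis
    by (metis (no_types, lifting) mult_le_cancel_left_pos norm_ge_zero order_le_less power2_eq_square zero_le_mult_iff)
qed

lemma linear_inj_isometry_factorization:
  fixes A :: "real^'m::finite \<Rightarrow> real^'d::finite"
  assumes A: "linear A" "inj A"
  obtains U :: "real^'m \<Rightarrow> real^'d" and R :: "real^'m \<Rightarrow> real^'m"
  where "linear U" "\<And>x. norm (U x) = norm x" "linear R" "\<And>x. A x = U (R x)"
proof -
  have "dim (range A) = dim (UNIV :: (real^'m) set)"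
    using dim_image_eq[OF A(1), of UNIV] A(2) by (simp add: inj_on_def)
  moreover have "subspace (range A)"
    by (rule linear_subspace_image[OF A(1) subspace_UNIV])
  ultimately obtain U :: "real^'m \<Rightarrow> real^'d" where U: "linear U" "range U = range A"
      and Un: "\<And>x. norm (U x) = norm x"
    using isometries_subspaces[OF subspace_UNIV, of "range A"] by (metis UNIV_I)
  show thesis
  proof
    show "linear (adjoint U \<circ> A)"
      using adjoint_linear[OF U(1)] A(1) linear_compose by blast
    show "A x = U ((adjoint U \<circ> A) x)" for x
    proof -
      obtain z where "A x = U z"
        using U(2) by (metis rangeE rangeI)
      then show ?thesis
        by (simp add: adjoint_isometry_left_inverse[OF U(1) Un])
    qed
  qed (use U Un in auto)
qed

lemma abs_det_adjoint_comp_le_gram: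
  fixes A :: "real^'m::finite \<Rightarrow> real^'d::finite" and L :: "real^'m \<Rightarrow> real^'d"
  assumes A: "linear A" "inj A" and L: "linear L" "\<And>y. norm (L y) = norm y"
  shows "\<bar>det (matrix (adjoint L \<circ> A))\<bar> \<le> sqrt (det (\<chi> i j. A (axis i 1) \<bullet> A (axis j 1)))"
proof -
  obtain U :: "real^'m \<Rightarrow> real^'d" and R :: "real^'m \<Rightarrow> real^'m"
    where U: "linear U" "\<And>x. norm (U x) = norm x" and R: "linear R" and AUR: "\<And>x. A x = U (R x)"
    using linear_inj_isometry_factorization[OF A] by blast
  have "A x \<bullet> A y = R x \<bullet> R y" for x y
    by (simp add: AUR inner_linear_isometry[OF U])
  then have "(\<chi> i j. A (axis i 1) \<bullet> A (axis j 1)) = transpose (matrix R) ** matrix R"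
    by (simp add: vec_eq_iff matrix_matrix_mult_def transpose_def matrix_def inner_vec_def)
  then have gram: "sqrt (det (\<chi> i j. A (axis i 1) \<bullet> A (axis j 1))) = \<bar>det (matrix R)\<bar>"
    by (simp add: det_mul det_transpose flip: power2_eq_square)
  have K: "linear (adjoint L \<circ> U)"
    using adjoint_linear[OF L(1)] U(1) linear_compose by blast
  have "\<bar>det (matrix (adjoint L \<circ> U))\<bar> \<le> 1"
    using K by (rule abs_det_matrix_contraction_le_1) (simp add: norm_adjoint_isometry_le[OF L, THEN order_trans] U(2))
  moreover have "adjoint L \<circ> A = (adjoint L \<circ> U) \<circ> R"
    by (auto simp: AUR)
  ultimately show ?thesis
    by (simp add: gram matrix_compose[OF R K] det_mul abs_mult mult_left_le_one_le)
qed

lemma tangent_proj_eq: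
  fixes L :: "'a::euclidean_space \<Rightarrow> 'b::euclidean_space"
  assumes L: "linear L" "\<And>y. norm (L y) = norm y" and R: "range L = tangent_space M p"
  shows "tangent_proj M p x = p + L (adjoint L (x - p))"
  unfolding tangent_proj_def
proof (rule the_equality)
  show "p + L (adjoint L (x - p)) \<in> affine_tangent M p \<and>
        (\<forall>v\<in>tangent_space M p. (x - (p + L (adjoint L (x - p)))) \<bullet> v = 0)"
  proof
    show "p + L (adjoint L (x - p)) \<in> affine_tangent M p"
      unfolding affine_tangent_def using R by blast
    show "\<forall>v\<in>tangent_space M p. (x - (p + L (adjoint L (x - p)))) \<bullet> v = 0"
    proof
      fix v assume "v \<in> tangent_space M p"
      then obtain z where v: "v = L z" using R by blast
      have "(x - (p + L (adjoint L (x - p)))) \<bullet> v = (x - p) \<bullet> L z - L (adjoint L (x - p)) \<bullet> L z"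
        by (simp add: v inner_diff_left algebra_simps)
      also have "\<dots> = 0"
        using adjoint_works[OF L(1), of z "x - p"] inner_linear_isometry[OF L(1) L(2)]
        by (simp add: inner_commute)
      finally show "(x - (p + L (adjoint L (x - p)))) \<bullet> v = 0" .
    qed
  qed
next
  fix y assume y: "y \<in> affine_tangent M p \<and> (\<forall>v\<in>tangent_space M p. (x - y) \<bullet> v = 0)"
  then obtain z' where yz: "y = p + L z'" unfolding affine_tangent_def using R[symmetric] by auto
  have "(x - y) \<bullet> L z = 0" for z using y R by blast
  then have "adjoint L (x - y) \<bullet> z = 0" for z
    using adjoint_works[OF L(1)] by (metis inner_commute)
  then have "adjoint L (x - y) = 0" by (metis inner_eq_zero_iff)
  then have "adjoint L x = adjoint L p + z'"
    using adjoint_isometry_left_inverse[OF L] linear_diff[OF adjoint_linear[OF L(1)]] linear_add[OF adjoint_linear[OF L(1)]]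
    by (simp add: yz)
  then have "adjoint L (x - p) = z'"
    using linear_diff[OF adjoint_linear[OF L(1)]] by simp
  then show "y = p + L (adjoint L (x - p))" by (simp add: yz)
qed

lemma proj_image_tangent_coordinates:
  fixes L :: "'a::euclidean_space \<Rightarrow> 'b::euclidean_space"
  assumes L: "linear L" "\<And>y. norm (L y) = norm y" and R: "range L = tangent_space M p"
  shows "{y. p + L y \<in> tangent_proj M p ` U} = (\<lambda>x. adjoint L (x - p)) ` U"
proof -
  have "inj L"
  proof (rule injI)
    fix x y
    assume "L x = L y"
    then have "norm (L (x - y)) = 0"
      by (simp add: linear_diff[OF L(1)])
    then show "x = y"
      by (simp add: L(2))
  qed
  then have "p + L y \<in> tangent_proj M p ` U \<longleftrightarrow> y \<in> (\<lambda>x. adjoint L (x - p)) ` U" for y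
    by (auto simp: tangent_proj_eq[OF L R] inj_eq image_iff)
  then show ?thesis
    by blast
qed

section \<open>Charts and the Riemannian volume\<close>

lemma
  fixes \<phi> :: "real^'m::finite \<Rightarrow> real^'d::finite"
  assumes vol: "riemannian_volume TYPE('m) M \<mu>" and chart: "local_param M \<phi> W" and A: "A \<in> sets \<mu>"
  shows sets_lebesgue_chart_preimage: "{w \<in> W. \<phi> w \<in> A} \<in> sets lebesgue"
    and emeasure_riemannian_volume_chart:
      "A \<subseteq> \<phi> ` W \<Longrightarrow> emeasure \<mu> A = (\<integral>\<^sup>+ w \<in> {w \<in> W. \<phi> w \<in> A}. ennreal (gram_factor \<phi> w) \<partial>lebesgue)"
proof -
  have "sets \<mu> = {A. A \<subseteq> M \<and> (\<forall>(\<phi> :: real^'m \<Rightarrow> real^'d) W. local_param M \<phi> W \<longrightarrow>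
                                  {w\<in>W. \<phi> w \<in> A} \<in> sets lebesgue)}"
    using vol unfolding riemannian_volume_def by (elim conjE)
  with chart A show "{w \<in> W. \<phi> w \<in> A} \<in> sets lebesgue"
    by simp
  have "\<forall>(\<phi> :: real^'m \<Rightarrow> real^'d) W A. local_param M \<phi> W \<longrightarrow> A \<in> sets \<mu> \<longrightarrow> A \<subseteq> \<phi> ` W \<longrightarrow>
        emeasure \<mu> A = (\<integral>\<^sup>+ w \<in> {w\<in>W. \<phi> w \<in> A}. ennreal (gram_factor \<phi> w) \<partial>lebesgue)"
    using vol unfolding riemannian_volume_def by (elim conjE)
  with chart A show "A \<subseteq> \<phi> ` W \<Longrightarrow> emeasure \<mu> A = (\<integral>\<^sup>+ w \<in> {w \<in> W. \<phi> w \<in> A}. ennreal (gram_factor \<phi> w) \<partial>lebesgue)"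
    by blast
qed

lemma abs_det_adjoint_comp_le_gram_factor:
  fixes \<phi> :: "real^'m::finite \<Rightarrow> real^'d::finite" and L :: "real^'m \<Rightarrow> real^'d"
  assumes "(\<phi> has_derivative D) (at w)" "inj D" and L: "linear L" "\<And>y. norm (L y) = norm y"
  shows "\<bar>det (matrix (adjoint L \<circ> D))\<bar> \<le> gram_factor \<phi> w"
  using abs_det_adjoint_comp_le_gram[OF has_derivative_linear[OF assms(1)] assms(2) L]
  by (simp add: gram_factor_def frechet_derivative_at[OF assms(1), symmetric])

lemma emeasure_chart_projection_le:
  fixes \<phi> :: "real^'m::finite \<Rightarrow> real^'d::finite" and L :: "real^'m \<Rightarrow> real^'d"
  assumes vol: "riemannian_volume TYPE('m) M \<mu>" and chart: "local_param M \<phi> W"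
    and U: "U \<in> sets \<mu>" "U \<subseteq> \<phi> ` W" and L: "linear L" "\<And>y. norm (L y) = norm y"
  shows "(\<lambda>x. adjoint L (x - p)) ` U \<in> sets lebesgue \<and>
         emeasure lebesgue ((\<lambda>x. adjoint L (x - p)) ` U) \<le> emeasure \<mu> U"
proof -
  obtain \<phi>' where \<phi>': "\<And>w. w \<in> W \<Longrightarrow> (\<phi> has_derivative \<phi>' w) (at w) \<and> inj (\<phi>' w)"
    using chart unfolding local_param_def by metis
  define S where "S = {w \<in> W. \<phi> w \<in> U}"
  define g where "g w = adjoint L (\<phi> w - p)" for w
  have S: "S \<in> sets lebesgue"
    unfolding S_def using vol chart U(1) by (rule sets_lebesgue_chart_preimage)
  have gS: "g ` S = (\<lambda>x. adjoint L (x - p)) ` U"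
    using U(2) by (auto simp: g_def S_def)
  have deriv: "(g has_derivative adjoint L \<circ> \<phi>' w) (at w within S)" if "w \<in> S" for w
  proof -
    have "((\<lambda>w. \<phi> w - p) has_derivative \<phi>' w) (at w)"
      using \<phi>' that by (auto simp: S_def intro!: derivative_eq_intros)
    moreover have "bounded_linear (adjoint L)"
      using adjoint_linear[OF L(1)] by (simp add: linear_conv_bounded_linear)
    ultimately have "(g has_derivative adjoint L \<circ> \<phi>' w) (at w)"
      unfolding g_def o_def by (rule bounded_linear.has_derivative[rotated])
    then show ?thesis
      by (rule has_derivative_at_withinI)
  qed
  then have meas: "g ` S \<in> sets lebesgue"
    using S by (intro differentiable_image_in_sets_lebesgue) (auto simp: differentiable_on_def differentiable_def)
  have "emeasure lebesgue (g ` S) \<le> (\<integral>\<^sup>+ w \<in> S. ennreal \<bar>det (matrix (adjoint L \<circ> \<phi>' w))\<bar> \<partial>lebesgue)"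
    using S deriv by (rule emeasure_differentiable_image_le)
  also have "\<dots> \<le> (\<integral>\<^sup>+ w \<in> S. ennreal (gram_factor \<phi> w) \<partial>lebesgue)"
  proof (rule nn_integral_mono)
    fix w
    show "ennreal \<bar>det (matrix (adjoint L \<circ> \<phi>' w))\<bar> * indicator S w \<le> ennreal (gram_factor \<phi> w) * indicator S w"
    proof (cases "w \<in> S")
      case True
      then have "\<bar>det (matrix (adjoint L \<circ> \<phi>' w))\<bar> \<le> gram_factor \<phi> w"
        using \<phi>' by (intro abs_det_adjoint_comp_le_gram_factor L) (auto simp: S_def)
      then show ?thesis
        using True by (simp add: ennreal_leI)
    qed simp
  qed
  also have "\<dots> = emeasure \<mu> U"
    unfolding S_def using emeasure_riemannian_volume_chart[OF vol chart U(1) U(2)] by simp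
  finally show ?thesis
    using meas by (simp add: gS)
qed

lemma chart_image_in_sets:
  assumes vol: "riemannian_volume TYPE('m::finite) M \<mu>" and chart: "local_param M (\<phi> :: real^'m \<Rightarrow> real^'d::finite) W"
  shows "\<phi> ` W \<in> sets \<mu>"
proof -
  obtain V where V: "open V" "\<phi> ` W = M \<inter> V"
    using chart by (auto simp: local_param_def)
  have "{w \<in> W'. \<psi> w \<in> M \<inter> V} \<in> sets lebesgue"
    if "local_param M \<psi> W'" for \<psi> :: "real^'m \<Rightarrow> real^'d" and W'
  proof -
    have "open W'" "continuous_on W' \<psi>" "\<psi> ` W' \<subseteq> M"
      using that by (auto simp: local_param_def smooth_on_def dest: spec[of _ 0])
    moreover have "{w \<in> W'. \<psi> w \<in> M \<inter> V} = W' \<inter> \<psi> -` V"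
      using \<open>\<psi> ` W' \<subseteq> M\<close> by auto
    ultimately have "open {w \<in> W'. \<psi> w \<in> M \<inter> V}"
      using continuous_open_preimage V(1) by metis
    then show ?thesis
      by (simp add: borel_open)
  qed
  moreover have "sets \<mu> = {A. A \<subseteq> M \<and> (\<forall>(\<psi> :: real^'m \<Rightarrow> real^'d) W'. local_param M \<psi> W' \<longrightarrow>
                                  {w\<in>W'. \<psi> w \<in> A} \<in> sets lebesgue)}"
    using vol unfolding riemannian_volume_def by (elim conjE)
  ultimately show ?thesis
    by (simp add: V(2))
qed

lemma compact_submanifold_finite_atlas:
  assumes "smooth_submanifold TYPE('m::finite) M" "compact M"
  obtains \<A> :: "((real^'m \<Rightarrow> real^'d::finite) \<times> (real^'m) set) set"
  where "finite \<A>" "\<And>\<phi> W. (\<phi>, W) \<in> \<A> \<Longrightarrow> local_param M \<phi> W" "M \<subseteq> (\<Union>(\<phi>, W)\<in>\<A>. \<phi> ` W)"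
proof -
  have "\<forall>q\<in>M. \<exists>(\<phi> :: real^'m \<Rightarrow> real^'d) W V.
          local_param M \<phi> W \<and> q \<in> \<phi> ` W \<and> open V \<and> \<phi> ` W = M \<inter> V"
  proof
    fix q assume "q \<in> M"
    then obtain \<phi> :: "real^'m \<Rightarrow> real^'d" and W where chart: "local_param M \<phi> W" "q \<in> \<phi> ` W"
      using assms(1) unfolding smooth_submanifold_def by blast
    moreover obtain V where "open V" "\<phi> ` W = M \<inter> V"
      using chart(1) unfolding local_param_def by blast
    ultimately show "\<exists>(\<phi> :: real^'m \<Rightarrow> real^'d) W V.
                       local_param M \<phi> W \<and> q \<in> \<phi> ` W \<and> open V \<and> \<phi> ` W = M \<inter> V"
      by blast
  qed
  then obtain \<Phi> :: "real^'d \<Rightarrow> real^'m \<Rightarrow> real^'d" and Wf Vf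
    where chart: "\<And>q. q \<in> M \<Longrightarrow> local_param M (\<Phi> q) (Wf q) \<and> q \<in> \<Phi> q ` Wf q \<and>
                            open (Vf q) \<and> \<Phi> q ` Wf q = M \<inter> Vf q"
    by metis
  have "M \<subseteq> (\<Union>q\<in>M. Vf q)" "\<And>q. q \<in> M \<Longrightarrow> open (Vf q)"
    using chart by blast+
  then obtain C where C: "C \<subseteq> M" "finite C" "M \<subseteq> (\<Union>q\<in>C. Vf q)"
    using compactE_image[OF assms(2)] by metis
  show thesis
  proof (rule that[of "(\<lambda>q. (\<Phi> q, Wf q)) ` C"])
    show "finite ((\<lambda>q. (\<Phi> q, Wf q)) ` C)"
      using C(2) by simp
    show "local_param M \<phi> W" if "(\<phi>, W) \<in> (\<lambda>q. (\<Phi> q, Wf q)) ` C" for \<phi> W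
      using that C(1) chart by auto
    have "M \<subseteq> (\<Union>q\<in>C. M \<inter> Vf q)"
      using C(3) by blast
    also have "\<dots> = (\<Union>q\<in>C. \<Phi> q ` Wf q)"
      using C(1) chart by (intro SUP_cong) auto
    finally show "M \<subseteq> (\<Union>(\<phi>, W)\<in>(\<lambda>q. (\<Phi> q, Wf q)) ` C. \<phi> ` W)"
      by (simp add: image_image)
  qed
qed

lemma image_emeasure_le_finite_cover:
  fixes \<mu> :: "'a measure" and \<nu> :: "'b measure" and h :: "'a \<Rightarrow> 'b"
  assumes "finite \<V>" "\<V> \<subseteq> sets \<mu>"
    and local: "\<And>A V. V \<in> \<V> \<Longrightarrow> A \<in> sets \<mu> \<Longrightarrow> A \<subseteq> V \<Longrightarrow>
                  h ` A \<in> sets \<nu> \<and> emeasure \<nu> (h ` A) \<le> emeasure \<mu> A"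
    and "A \<in> sets \<mu>" "A \<subseteq> \<Union>\<V>"
  shows "h ` A \<in> sets \<nu> \<and> emeasure \<nu> (h ` A) \<le> emeasure \<mu> A"
  using assms
proof (induction \<V> arbitrary: A rule: finite_induct)
  case empty
  then show ?case by simp
next
  case (insert V \<V>)
  define A1 where "A1 = A \<inter> V"
  define A2 where "A2 = A - V"
  have sets: "A1 \<in> sets \<mu>" "A2 \<in> sets \<mu>"
    using insert.prems by (auto simp: A1_def A2_def)
  have A1: "h ` A1 \<in> sets \<nu> \<and> emeasure \<nu> (h ` A1) \<le> emeasure \<mu> A1"
    using insert.prems(2)[of V A1] sets(1) by (simp add: A1_def)
  have A2: "h ` A2 \<in> sets \<nu> \<and> emeasure \<nu> (h ` A2) \<le> emeasure \<mu> A2"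
  proof (rule insert.IH)
    show "\<V> \<subseteq> sets \<mu>" "A2 \<subseteq> \<Union>\<V>"
      using insert.prems(1,4) by (auto simp: A2_def)
  qed (use insert.prems(2) sets(2) in auto)
  have A: "A = A1 \<union> A2" "A1 \<inter> A2 = {}"
    by (auto simp: A1_def A2_def)
  have "emeasure \<nu> (h ` A) \<le> emeasure \<nu> (h ` A1) + emeasure \<nu> (h ` A2)"
    using A1 A2 by (simp add: A(1) image_Un emeasure_subadditive)
  also have "\<dots> \<le> emeasure \<mu> A1 + emeasure \<mu> A2"
    using A1 A2 by (intro add_mono) auto
  also have "\<dots> = emeasure \<mu> A"
    using plus_emeasure[OF sets A(2)] by (simp add: A(1))
  finally show ?case
    using A1 A2 by (simp add: A(1) image_Un sets.Un)
qed

lemma emeasure_tangent_coordinates_le: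
  fixes L :: "real^'m::finite \<Rightarrow> real^'d::finite"
  assumes manifold: "smooth_submanifold TYPE('m) M" and "compact M"
    and vol: "riemannian_volume TYPE('m) M \<mu>" and U: "U \<in> sets \<mu>"
    and L: "linear L" "\<And>y. norm (L y) = norm y"
  shows "emeasure lebesgue ((\<lambda>x. adjoint L (x - p)) ` U) \<le> emeasure \<mu> U"
proof -
  obtain \<A> :: "((real^'m \<Rightarrow> real^'d) \<times> (real^'m) set) set"
    where \<A>: "finite \<A>" "\<And>\<phi> W. (\<phi>, W) \<in> \<A> \<Longrightarrow> local_param M \<phi> W" "M \<subseteq> (\<Union>(\<phi>, W)\<in>\<A>. \<phi> ` W)"
    using compact_submanifold_finite_atlas[OF assms(1,2)] by blast
  have "(\<lambda>x. adjoint L (x - p)) ` U \<in> sets lebesgue \<and>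
        emeasure lebesgue ((\<lambda>x. adjoint L (x - p)) ` U) \<le> emeasure \<mu> U"
  proof (rule image_emeasure_le_finite_cover[where \<V> = "(\<lambda>(\<phi>, W). \<phi> ` W) ` \<A>"])
    show "finite ((\<lambda>(\<phi>, W). \<phi> ` W) ` \<A>)"
      using \<A>(1) by simp
    show "(\<lambda>(\<phi>, W). \<phi> ` W) ` \<A> \<subseteq> sets \<mu>"
      using \<A>(2) chart_image_in_sets[OF vol] by auto
    show "U \<subseteq> \<Union> ((\<lambda>(\<phi>, W). \<phi> ` W) ` \<A>)"
      using sets.sets_into_space[OF U] \<A>(3) vol by (auto simp: riemannian_volume_def)
    fix A V
    assume "V \<in> (\<lambda>(\<phi>, W). \<phi> ` W) ` \<A>" "A \<in> sets \<mu>" "A \<subseteq> V"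
    then obtain \<phi> W where "(\<phi>, W) \<in> \<A>" "A \<in> sets \<mu>" "A \<subseteq> \<phi> ` W"
      by auto
    then show "(\<lambda>x. adjoint L (x - p)) ` A \<in> sets lebesgue \<and>
               emeasure lebesgue ((\<lambda>x. adjoint L (x - p)) ` A) \<le> emeasure \<mu> A"
      using emeasure_chart_projection_le[OF vol \<A>(2) _ _ L] by blast
  qed (rule U)
  then show ?thesis
    by (rule conjunct2)
qed

theorem mainTheorem14:
  fixes M :: "(real^'d) set" and p :: "real^'d" and r :: real
    and U :: "(real^'d) set" and \<mu> :: "(real^'d) measure"
    and L :: "real^'m \<Rightarrow> real^'d"
  assumes manifold: "smooth_submanifold TYPE('m::finite) M"
    and closed_mf: "compact M"
    and reach_pos: "reach M > 0"
    and vol: "riemannian_volume TYPE('m) M \<mu>"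
    and pM: "p \<in> M"
    and r_pos: "0 < r" and r_le: "ereal r \<le> reach M"
    and U_sub: "U \<subseteq> ball p r \<inter> M"
    and U_meas: "U \<in> sets \<mu>"
    and L_lin: "linear L" and L_isom: "\<forall>y. norm (L y) = norm y"
    and L_onto: "range L = tangent_space M p"
  shows "emeasure \<mu> U \<ge> emeasure lebesgue {y. p + L y \<in> tangent_proj M p ` U}"
proof -
  have "emeasure lebesgue ((\<lambda>x. adjoint L (x - p)) ` U) \<le> emeasure \<mu> U"
    using manifold closed_mf vol U_meas L_lin L_isom by (intro emeasure_tangent_coordinates_le) auto
  then show ?thesis
    using L_lin L_isom L_onto by (simp add: proj_image_tangent_coordinates)
qed

end
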